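(* Let $T:X\rightrightarrows X^*$ be a pseudomonotone operator and let $P(T)$ be the set of all maximal pseudomonotone operators $M:X\rightrightarrows X^*$ with $T\subset M$. Then (1) $T^\rho=\bigcup_{M\in P(T)}M$; (2) $T^{\rho\rho}=\bigcap_{M\in P(T)}M$; (3) $T$ is maximal pseudomonotone if and only if $T=T^\rho$.
   Context: $X$ is a real Banach space with dual $X^*$ and pairing $\langle x,x^*\rangle=x^*(x)$. A multivalued operator $T:X\rightrightarrows X^*$ is identified with its graph $T\subset X\times X^*$. For $(x,x^* ),(y,y^* )\in X\times X^*$, write $(x,x^* )\sim_p(y,y^* )$ if either $\min\{\langle x-y,y^*\rangle,\langle y-x,x^*\rangle\}<0$ or $\langle x-y,y^*\rangle=\langle y-x,x^*\rangle=0$. The pseudomonotone polar of $T$ is $T^\rho=\{(x,x^* )\in X\times X^*: (x,x^* )\sim_p(y,y^* )\ \forall (y,y^* )\in T\}$, and $T^{\rho\rho}=(T^\rho)^\rho$. $T$ is pseudomonotone if for all $(x,x^* ),(y,y^* )\in T$, $\langle y-x,x^*\rangle\ge0$ implies $\langle y-x,y^*\rangle\ge0$. $T$ is maximal pseudomonotone if it is pseudomonotone and for every pseudomonotone $S$ with $T\subset S$ one has $S=T$. *)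

theory Defs
  imports "HOL-Analysis.Analysis"
begin

text \<open>A multivalued operator is identified
with its graph, a subset of X \<times> X*.\<close>

type_synonym 'a operator = "('a \<times> ('a \<Rightarrow>\<^sub>L real)) set"

definition pairing :: "'a::banach \<Rightarrow> ('a \<Rightarrow>\<^sub>L real) \<Rightarrow> real" where
  "pairing x xs = blinfun_apply xs x"

definition sim_p :: "'a::banach \<times> ('a \<Rightarrow>\<^sub>L real) \<Rightarrow> 'a \<times> ('a \<Rightarrow>\<^sub>L real) \<Rightarrow> bool" where
  "sim_p p q = (case p of (x, xs) \<Rightarrow> case q of (y, ys) \<Rightarrow>
      min (pairing (x - y) ys) (pairing (y - x) xs) < 0 \<or>
      (pairing (x - y) ys = 0 \<and> pairing (y - x) xs = 0))"

definition pseudomonotone_polar :: "'a::banach operator \<Rightarrow> 'a operator" where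
  "pseudomonotone_polar T = {p. \<forall>q\<in>T. sim_p p q}"

definition pseudomonotone :: "'a::banach operator \<Rightarrow> bool" where
  "pseudomonotone T = (\<forall>(x, xs)\<in>T. \<forall>(y, ys)\<in>T.
      pairing (y - x) xs \<ge> 0 \<longrightarrow> pairing (y - x) ys \<ge> 0)"

definition maximal_pseudomonotone :: "'a::banach operator \<Rightarrow> bool" where
  "maximal_pseudomonotone T = (pseudomonotone T \<and>
      (\<forall>S. pseudomonotone S \<and> T \<subseteq> S \<longrightarrow> S = T))"

definition maximal_extensions :: "'a::banach operator \<Rightarrow> 'a operator set" where
  "maximal_extensions T = {M. maximal_pseudomonotone M \<and> T \<subseteq> M}"

end

theory Submission
  imports Defs
begin

text \<open>Pseudomonotonicity of a set is the pairwise relation \<open>sim_p\<close>, so the polar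
\<open>T\<^sup>\<rho>\<close> collects exactly the points that can be added to \<open>T\<close> without destroying
pseudomonotonicity. Zorn's lemma extends each such enlargement to a maximal operator,
which gives (1). A maximal operator is its own polar, and the polar turns unions into
intersections, so applying the polar to (1) gives (2); (3) is the same observation for
\<open>T\<close> itself.\<close>

lemma pairing_minus_commute:
  "pairing (x - y) (xs :: 'a::banach \<Rightarrow>\<^sub>L real) = - pairing (y - x) xs"
  by (simp add: pairing_def blinfun.diff_right)

lemma sim_p_iff:
  "sim_p (x, xs) (y, ys) \<longleftrightarrow>
     (pairing (y - x) xs \<ge> 0 \<longrightarrow> pairing (y - x) ys \<ge> 0) \<and>
     (pairing (x - y) ys \<ge> 0 \<longrightarrow> pairing (x - y) xs \<ge> 0)"
  using pairing_minus_commute[of x y ys] pairing_minus_commute[of x y xs]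
  by (auto simp: sim_p_def min_def)

lemma sim_p_sym: "sim_p p q \<longleftrightarrow> sim_p q p"
  by (cases p; cases q) (auto simp: sim_p_def)

lemma sim_p_refl: "sim_p p p"
  by (cases p) (auto simp: sim_p_def pairing_def)

lemma pseudomonotone_iff_sim_p:
  "pseudomonotone S \<longleftrightarrow> (\<forall>p\<in>S. \<forall>q\<in>S. sim_p p q)"
  unfolding pseudomonotone_def by (fastforce simp: sim_p_iff)

lemma pseudomonotone_insert_iff:
  "pseudomonotone (insert p S) \<longleftrightarrow> pseudomonotone S \<and> p \<in> pseudomonotone_polar S"
  unfolding pseudomonotone_iff_sim_p pseudomonotone_polar_def
  by (auto intro: sim_p_refl simp: sim_p_sym)

lemma pseudomonotone_subset_polar:
  assumes "pseudomonotone S" and "T \<subseteq> S"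
  shows "S \<subseteq> pseudomonotone_polar T"
  using assms unfolding pseudomonotone_iff_sim_p pseudomonotone_polar_def by blast

lemma pseudomonotone_polar_Union:
  "pseudomonotone_polar (\<Union>\<A>) = \<Inter> (pseudomonotone_polar ` \<A>)"
  unfolding pseudomonotone_polar_def by blast

lemma pseudomonotone_Union_chain:
  assumes "chain\<^sub>\<subseteq> \<C>" and "\<And>U. U \<in> \<C> \<Longrightarrow> pseudomonotone U"
  shows "pseudomonotone (\<Union>\<C>)"
  unfolding pseudomonotone_iff_sim_p
proof (intro ballI)
  fix p q assume "p \<in> \<Union>\<C>" "q \<in> \<Union>\<C>"
  then obtain X Y where X: "X \<in> \<C>" "p \<in> X" and Y: "Y \<in> \<C>" "q \<in> Y" by blast
  from assms(1) X(1) Y(1) have "X \<subseteq> Y \<or> Y \<subseteq> X" unfolding chain_subset_def by blast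
  with X Y assms(2) show "sim_p p q" unfolding pseudomonotone_iff_sim_p by blast
qed

lemma pseudomonotone_extends_to_maximal:
  assumes "pseudomonotone S"
  obtains M where "M \<in> maximal_extensions S"
proof -
  let ?A = "{U. pseudomonotone U \<and> S \<subseteq> U}"
  have "\<exists>U\<in>?A. \<forall>X\<in>\<C>. X \<subseteq> U" if \<C>: "\<C> \<in> chains ?A" for \<C>
  proof (cases "\<C> = {}")
    case True
    with assms show ?thesis by auto
  next
    case False
    from \<C> have "chain\<^sub>\<subseteq> \<C>" and "\<C> \<subseteq> ?A" unfolding chains_def by auto
    then have "pseudomonotone (\<Union>\<C>)" by (blast intro: pseudomonotone_Union_chain)
    moreover have "S \<subseteq> \<Union>\<C>" using False \<open>\<C> \<subseteq> ?A\<close> by auto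
    ultimately show ?thesis by blast
  qed
  then obtain M where "M \<in> ?A" and "\<forall>X\<in>?A. M \<subseteq> X \<longrightarrow> X = M"
    using Zorn_Lemma2[of ?A] by (meson ballI)
  then have "M \<in> maximal_extensions S"
    unfolding maximal_extensions_def maximal_pseudomonotone_def by auto
  then show thesis by (rule that)
qed

lemma maximal_pseudomonotone_polar_eq:
  assumes "maximal_pseudomonotone M"
  shows "pseudomonotone_polar M = M"
proof
  have pm: "pseudomonotone M" using assms unfolding maximal_pseudomonotone_def by blast
  show "pseudomonotone_polar M \<subseteq> M"
  proof
    fix p assume "p \<in> pseudomonotone_polar M"
    with pm have "pseudomonotone (insert p M)" by (simp add: pseudomonotone_insert_iff)
    with assms have "insert p M = M" unfolding maximal_pseudomonotone_def by blast
    then show "p \<in> M" by blast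
  qed
  show "M \<subseteq> pseudomonotone_polar M" using pm by (rule pseudomonotone_subset_polar) simp
qed

lemma pseudomonotone_polar_eq_Union_maximal_extensions:
  assumes "pseudomonotone T"
  shows "pseudomonotone_polar T = \<Union> (maximal_extensions T)"
proof
  show "pseudomonotone_polar T \<subseteq> \<Union> (maximal_extensions T)"
  proof
    fix p assume "p \<in> pseudomonotone_polar T"
    with assms have "pseudomonotone (insert p T)" by (simp add: pseudomonotone_insert_iff)
    then obtain M where "M \<in> maximal_extensions (insert p T)"
      by (rule pseudomonotone_extends_to_maximal)
    then show "p \<in> \<Union> (maximal_extensions T)" unfolding maximal_extensions_def by blast
  qed
  show "\<Union> (maximal_extensions T) \<subseteq> pseudomonotone_polar T"
    unfolding maximal_extensions_def maximal_pseudomonotone_def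
    using pseudomonotone_subset_polar by blast
qed

lemma maximal_pseudomonotone_iff_polar_eq:
  assumes "pseudomonotone T"
  shows "maximal_pseudomonotone T \<longleftrightarrow> T = pseudomonotone_polar T"
proof
  assume "maximal_pseudomonotone T"
  then show "T = pseudomonotone_polar T" by (simp add: maximal_pseudomonotone_polar_eq)
next
  assume "T = pseudomonotone_polar T"
  with assms pseudomonotone_subset_polar show "maximal_pseudomonotone T"
    unfolding maximal_pseudomonotone_def by blast
qed

theorem mainTheorem9:
  fixes T :: "'a::banach operator"
  assumes "pseudomonotone T"
  shows "pseudomonotone_polar T = \<Union> (maximal_extensions T) \<and>
         pseudomonotone_polar (pseudomonotone_polar T) = \<Inter> (maximal_extensions T) \<and>
         (maximal_pseudomonotone T \<longleftrightarrow> T = pseudomonotone_polar T)"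
proof (intro conjI)
  show polar: "pseudomonotone_polar T = \<Union> (maximal_extensions T)"
    using assms by (rule pseudomonotone_polar_eq_Union_maximal_extensions)
  have "pseudomonotone_polar (pseudomonotone_polar T)
          = \<Inter> (pseudomonotone_polar ` maximal_extensions T)"
    by (simp add: polar pseudomonotone_polar_Union)
  also have "\<dots> = \<Inter> (maximal_extensions T)"
    by (simp add: maximal_extensions_def maximal_pseudomonotone_polar_eq)
  finally show "pseudomonotone_polar (pseudomonotone_polar T) = \<Inter> (maximal_extensions T)" .
  show "maximal_pseudomonotone T \<longleftrightarrow> T = pseudomonotone_polar T"
    using assms by (rule maximal_pseudomonotone_iff_polar_eq)
qed

end
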